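(* Let $R$ be a commutative ring in which $2$ is invertible and $n\ge3$. Equip $R^{2n+1}$ with the standard form of matrix $\tilde\phi_{2n+1}=(2)\perp\widetilde{\psi}_n$. Let $u=(0,u_1',u_1'',u_2',u_2'',\dots,u_n',u_n'')\in R^{2n+1}$ be an isotropic unimodular vector and $v=(0,v_1',v_1'',\dots,v_n',v_n'')\in R^{2n+1}$ with $\langle u,v\rangle=0$. Then $\sigma_{u,v}\in\mathrm{EO}_{2n+1}(R)$.
   Context: $e_{i,j}$ are matrix units and $\widetilde{\psi}_s=\sum_{i=1}^s(e_{2i-1,2i}+e_{2i,2i-1})$. On $R^{2n+1}$ with coordinates $(a_1,a_1',a_1'',\dots,a_n',a_n'')$ the bilinear form is $\langle a,b\rangle=a^t\tilde\phi_{2n+1}b=2a_1b_1+\sum_i(a_i'b_i''+a_i''b_i')$ and the quadratic form is $q(a)=\tfrac12\langle a,a\rangle=a_1^2+\sum_ia_i'a_i''$. For $u,v$ with $u$ unimodular, $q(u)=0$, $\langle u,v\rangle=0$ and $r=q(v)$, the Eichler–Siegel–Dickson transvection is $\sigma_{u,v}(x)=x+\langle v,x\rangle u-\langle u,x\rangle v-r\langle u,x\rangle u$. Odd elementary orthogonal group: for $N=2s+1$ and $1\le i\le s$, $\lambda\in R$, $F^1_i(\lambda)=I_N+\lambda(e_{1,2i+1}-2e_{2i,1}-\lambda e_{2i,2i+1})$, $F^2_i(\lambda)=I_N+\lambda(e_{1,2i}-2e_{2i+1,1}-\lambda e_{2i+1,2i})$; $\mathrm{EO}_{2s+1}(R)$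 is the group they generate. *)

theory Defs
  imports "Jordan_Normal_Form.Matrix"
begin

text \<open>Conventions: matrices and vectors are 0-indexed (Jordan_Normal_Form).
  Paper index k (1..N) corresponds to index k-1 here. So coordinate 0 is a_1,
  coordinate 2i-1 is a_i', coordinate 2i is a_i'' (1 \<le> i \<le> n).\<close>

definition munit :: "nat \<Rightarrow> nat \<Rightarrow> nat \<Rightarrow> 'a::{zero,one} mat" where
  "munit N i j = mat N N (\<lambda>(a,b). if a = i \<and> b = j then 1 else 0)"

text \<open>psi_s = sum_{i=1}^s (e_{2i-1,2i} + e_{2i,2i-1}) (1-indexed), a 2s x 2s matrix, written entrywise (0-indexed).\<close>
definition psi_tilde :: "nat \<Rightarrow> 'a::comm_ring_1 mat" where
  "psi_tilde s = mat (2*s) (2*s) (\<lambda>(a,b).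
     if \<exists>i\<in>{1..s}. (a = 2*i-2 \<and> b = 2*i-1) \<or> (a = 2*i-1 \<and> b = 2*i-2) then 1 else 0)"

definition phi_tilde :: "nat \<Rightarrow> 'a::comm_ring_1 mat" where
  "phi_tilde n = four_block_mat (mat 1 1 (\<lambda>_. 2)) (0\<^sub>m 1 (2*n)) (0\<^sub>m (2*n) 1) (psi_tilde n)"

definition bform :: "nat \<Rightarrow> 'a::comm_ring_1 vec \<Rightarrow> 'a vec \<Rightarrow> 'a" where
  "bform n a b = a \<bullet> (phi_tilde n *\<^sub>v b)"

definition qform :: "nat \<Rightarrow> 'a::comm_ring_1 vec \<Rightarrow> 'a" where
  "qform n a = (a $ 0)^2 + (\<Sum>i\<in>{1..n}. a $ (2*i-1) * a $ (2*i))"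

definition unimodular :: "nat \<Rightarrow> 'a::comm_ring_1 vec \<Rightarrow> bool" where
  "unimodular N u \<longleftrightarrow> (\<exists>w \<in> carrier_vec N. u \<bullet> w = 1)"

definition esd :: "nat \<Rightarrow> 'a::comm_ring_1 vec \<Rightarrow> 'a vec \<Rightarrow> 'a vec \<Rightarrow> 'a vec" where
  "esd n u v x = x + bform n v x \<cdot>\<^sub>v u - bform n u x \<cdot>\<^sub>v v
                  - (qform n v * bform n u x) \<cdot>\<^sub>v u"

definition esd_mat :: "nat \<Rightarrow> 'a::comm_ring_1 vec \<Rightarrow> 'a vec \<Rightarrow> 'a mat" where
  "esd_mat n u v = mat (2*n+1) (2*n+1) (\<lambda>(i,j). esd n u v (unit_vec (2*n+1) j) $ i)"

text \<open>Generators, N = 2s+1, 1 \<le> i \<le> s (paper indices shifted by -1):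
  F1_i(l) = I + l(e_{1,2i+1} - 2 e_{2i,1} - l e_{2i,2i+1}),
  F2_i(l) = I + l(e_{1,2i} - 2 e_{2i+1,1} - l e_{2i+1,2i}).\<close>
definition F1 :: "nat \<Rightarrow> nat \<Rightarrow> 'a::comm_ring_1 \<Rightarrow> 'a mat" where
  "F1 N i l = 1\<^sub>m N + l \<cdot>\<^sub>m (munit N 0 (2*i) - 2 \<cdot>\<^sub>m munit N (2*i-1) 0 - l \<cdot>\<^sub>m munit N (2*i-1) (2*i))"

definition F2 :: "nat \<Rightarrow> nat \<Rightarrow> 'a::comm_ring_1 \<Rightarrow> 'a mat" where
  "F2 N i l = 1\<^sub>m N + l \<cdot>\<^sub>m (munit N 0 (2*i-1) - 2 \<cdot>\<^sub>m munit N (2*i) 0 - l \<cdot>\<^sub>m munit N (2*i) (2*i-1))"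

definition EO_gens :: "nat \<Rightarrow> 'a::comm_ring_1 mat set" where
  "EO_gens s = {F1 (2*s+1) i l | i l. 1 \<le> i \<and> i \<le> s} \<union> {F2 (2*s+1) i l | i l. 1 \<le> i \<and> i \<le> s}"

text \<open>EO_{2s+1}(R): the subgroup of GL_{2s+1}(R) generated by the F's
  (closed under identity, right multiplication by generators and by their inverses).\<close>
inductive_set EO :: "nat \<Rightarrow> 'a::comm_ring_1 mat set" for s where
  EO_one: "1\<^sub>m (2*s+1) \<in> EO s"
| EO_gen: "A \<in> EO s \<Longrightarrow> G \<in> EO_gens s \<Longrightarrow> A * G \<in> EO s"
| EO_inv: "A \<in> EO s \<Longrightarrow> G \<in> EO_gens s \<Longrightarrow> B \<in> carrier_mat (2*s+1) (2*s+1)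
           \<Longrightarrow> B * G = 1\<^sub>m (2*s+1) \<Longrightarrow> G * B = 1\<^sub>m (2*s+1) \<Longrightarrow> A * B \<in> EO s"

end

(*
  For isotropic u the transvections sigma_{u,v} are additive in v, sigma_{u,v} sigma_{u,w} = sigma_{u,v+w},
  and an isometry g conjugates sigma_{u,v} into sigma_{gu,gv}.  So it suffices to find enough v
  orthogonal to u with sigma_{u,v} in EO.  The generators of EO are sigma_{e_k, -l e_0}; conjugating
  them (this is where 2 is inverted) gives every sigma_{e_k,x} with x orthogonal to e_k, and one more
  conjugation gives sigma_{w,z} for orthogonal isotropic w, z vanishing on a common hyperbolic pair.
  Writing u.w = 1, every v orthogonal to u is a combination of the vectors
  z = u_{b*} e_a - u_{a*} e_b (b* the hyperbolic partner of b).  For b <> a* such z is isotropic and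
  sigma_{u,z} = sigma_{z,-u}; splitting -u into its entries at a*, b* and the rest reduces this to the
  previous cases, using a hyperbolic pair disjoint from a, a*, b, b* (here n >= 3 is needed).  The
  vector u_a e_a - u_{a*} e_{a*} is, modulo u, a combination of vectors of the first kind.
*)

theory Submission
  imports Defs
begin

section \<open>The quadratic space\<close>

(* A constant, so that the simplifier does not rewrite 2*n+1 to Suc (2*n). *)
definition qdim :: "nat \<Rightarrow> nat" where
  "qdim n = 2*n+1"

lemma qdim_pos [simp]: "0 < qdim n"
  unfolding qdim_def by simp

definition partner :: "nat \<Rightarrow> nat" where
  "partner k = (if k = 0 then 0 else if odd k then k + 1 else k - 1)"

definition phi_coeff :: "nat \<Rightarrow> 'a::comm_ring_1" where
  "phi_coeff k = (if k = 0 then 2 else 1)"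

lemma partner_partner [simp]: "partner (partner k) = k"
  unfolding partner_def by auto

lemma partner_eq_iff: "partner k = j \<longleftrightarrow> k = partner j"
  by (metis partner_partner)

lemma partner_0 [simp]: "partner 0 = 0"
  unfolding partner_def by simp

lemma partner_eq_0_iff [simp]: "partner k = 0 \<longleftrightarrow> k = 0"
  unfolding partner_def by auto

lemma partner_pos_iff [simp]: "0 < partner k \<longleftrightarrow> 0 < k"
  unfolding partner_def by auto

lemma partner_less [simp]: "k < qdim n \<Longrightarrow> partner k < qdim n"
  unfolding partner_def qdim_def by (auto elim!: oddE)

lemma partner_neq: "k \<noteq> 0 \<Longrightarrow> partner k \<noteq> k"
  unfolding partner_def by auto

lemma phi_coeff_partner [simp]: "phi_coeff (partner k) = phi_coeff k"
  unfolding phi_coeff_def by simp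

lemma phi_coeff_0 [simp]: "phi_coeff 0 = 2"
  and phi_coeff_nonzero [simp]: "k \<noteq> 0 \<Longrightarrow> phi_coeff k = 1"
  unfolding phi_coeff_def by simp_all

lemma phi_tilde_carrier: "phi_tilde n \<in> carrier_mat (qdim n) (qdim n)"
  unfolding phi_tilde_def psi_tilde_def qdim_def by (rule carrier_matI) auto

lemma phi_tilde_dim [simp]:
  "dim_row (phi_tilde n) = qdim n" "dim_col (phi_tilde n) = qdim n"
  using phi_tilde_carrier[of n] by auto

lemma phi_tilde_index:
  assumes "i < qdim n" "j < qdim n"
  shows "phi_tilde n $$ (i,j) = (if j = partner i then phi_coeff i else 0)"
proof -
  have psi: "(\<exists>t\<in>{1..n}. (i-1 = 2*t-2 \<and> j-1 = 2*t-1) \<or> (i-1 = 2*t-1 \<and> j-1 = 2*t-2))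
      \<longleftrightarrow> j = partner i" if "i \<noteq> 0" "j \<noteq> 0"
  proof
    assume "\<exists>t\<in>{1..n}. (i-1 = 2*t-2 \<and> j-1 = 2*t-1) \<or> (i-1 = 2*t-1 \<and> j-1 = 2*t-2)"
    then show "j = partner i"
      using that unfolding partner_def by auto presburger+
  next
    assume j: "j = partner i"
    show "\<exists>t\<in>{1..n}. (i-1 = 2*t-2 \<and> j-1 = 2*t-1) \<or> (i-1 = 2*t-1 \<and> j-1 = 2*t-2)"
    proof (cases "odd i")
      case True
      then obtain t where "i = 2*t+1" by (metis oddE)
      with assms j that show ?thesis unfolding partner_def qdim_def by (intro bexI[of _ "t+1"]) auto
    next
      case False
      then obtain t where "i = 2*t" by (metis evenE)
      with assms j that show ?thesis unfolding partner_def qdim_def by (intro bexI[of _ t]) auto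
    qed
  qed
  show ?thesis
    using assms psi unfolding phi_tilde_def psi_tilde_def qdim_def by (auto simp: phi_coeff_def)
qed

lemma bform_coord:
  assumes y: "y \<in> carrier_vec (qdim n)"
  shows "bform n x y = (\<Sum>k<qdim n. phi_coeff k * x $ k * y $ partner k)"
proof -
  have "(phi_tilde n *\<^sub>v y) $ k = phi_coeff k * y $ partner k" if k: "k < qdim n" for k
  proof -
    have "(phi_tilde n *\<^sub>v y) $ k = (\<Sum>j<qdim n. phi_tilde n $$ (k,j) * y $ j)"
      using k y by (simp add: scalar_prod_def row_def lessThan_atLeast0)
    also have "\<dots> = (\<Sum>j<qdim n. if j = partner k then phi_coeff k * y $ j else 0)"
      using k by (intro sum.cong) (auto simp: phi_tilde_index)
    finally show ?thesis using k by simp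
  qed
  then show ?thesis
    unfolding bform_def scalar_prod_def
    by (auto simp: lessThan_atLeast0 mult.assoc mult.left_commute intro: sum.cong)
qed

lemma sum_phi_coeff_pairs:
  "(\<Sum>k<2*m+1. phi_coeff k * x $ k * y $ partner k)
     = 2 * x $ 0 * y $ 0 + (\<Sum>i\<in>{1..m}. x $ (2*i-1) * y $ (2*i) + x $ (2*i) * y $ (2*i-1))"
proof (induction m)
  case (Suc m)
  have "partner (2*m+1) = 2*m+2" "partner (Suc (2*m+1)) = 2*m+1"
    unfolding partner_def by auto
  moreover have "2 * Suc m + 1 = Suc (Suc (2*m+1))" by simp
  ultimately show ?case using Suc by (simp add: algebra_simps)
qed simp

lemma bform_pairs:
  assumes "y \<in> carrier_vec (qdim n)"
  shows "bform n x y = 2 * x $ 0 * y $ 0 + (\<Sum>i\<in>{1..n}. x $ (2*i-1) * y $ (2*i) + x $ (2*i) * y $ (2*i-1))"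
  using bform_coord[OF assms] sum_phi_coeff_pairs[where m = n] by (simp only: qdim_def)

lemma bform_sym:
  assumes "x \<in> carrier_vec (qdim n)" "y \<in> carrier_vec (qdim n)"
  shows "bform n x y = bform n y x"
  unfolding bform_coord[OF assms(1)] bform_coord[OF assms(2)]
  by (rule sum.reindex_bij_witness[of _ partner partner]) (auto simp: algebra_simps)

lemma bform_right_linear [simp]:
  "y \<in> carrier_vec (qdim n) \<Longrightarrow> z \<in> carrier_vec (qdim n) \<Longrightarrow>
     bform n x (y + z) = bform n x y + bform n x z"
  "y \<in> carrier_vec (qdim n) \<Longrightarrow> z \<in> carrier_vec (qdim n) \<Longrightarrow>
     bform n x (y - z) = bform n x y - bform n x z"
  "y \<in> carrier_vec (qdim n) \<Longrightarrow> bform n x (c \<cdot>\<^sub>v y) = c * bform n x y"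
  "y \<in> carrier_vec (qdim n) \<Longrightarrow> bform n x (- y) = - bform n x y"
  "bform n x (0\<^sub>v (qdim n)) = 0"
  by (simp_all add: bform_coord sum.distrib sum_subtractf sum_distrib_left sum_negf algebra_simps)

lemma bform_left_linear [simp]:
  "x \<in> carrier_vec (qdim n) \<Longrightarrow> y \<in> carrier_vec (qdim n) \<Longrightarrow> z \<in> carrier_vec (qdim n) \<Longrightarrow>
     bform n (y + z) x = bform n y x + bform n z x"
  "x \<in> carrier_vec (qdim n) \<Longrightarrow> y \<in> carrier_vec (qdim n) \<Longrightarrow> z \<in> carrier_vec (qdim n) \<Longrightarrow>
     bform n (y - z) x = bform n y x - bform n z x"
  "x \<in> carrier_vec (qdim n) \<Longrightarrow> y \<in> carrier_vec (qdim n) \<Longrightarrow>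
     bform n (c \<cdot>\<^sub>v y) x = c * bform n y x"
  "x \<in> carrier_vec (qdim n) \<Longrightarrow> y \<in> carrier_vec (qdim n) \<Longrightarrow> bform n (- y) x = - bform n y x"
  "x \<in> carrier_vec (qdim n) \<Longrightarrow> bform n (0\<^sub>v (qdim n)) x = 0"
  by (simp_all add: bform_sym[of _ n x])

lemma bform_unit_right:
  assumes "k < qdim n"
  shows "bform n x (unit_vec (qdim n) k) = phi_coeff k * x $ partner k"
proof -
  have "bform n x (unit_vec (qdim n) k) = (\<Sum>j<qdim n. if j = partner k then phi_coeff j * x $ j else 0)"
    using assms unfolding bform_coord[OF unit_vec_carrier]
    by (intro sum.cong) (auto simp: partner_eq_iff)
  then show ?thesis using assms by simp
qed

lemma bform_unit_left:
  "k < qdim n \<Longrightarrow> x \<in> carrier_vec (qdim n) \<Longrightarrow>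
   bform n (unit_vec (qdim n) k) x = phi_coeff k * x $ partner k"
  by (simp add: bform_sym[of _ n x] bform_unit_right)

lemma qform_add:
  assumes x: "x \<in> carrier_vec (qdim n)" and y: "y \<in> carrier_vec (qdim n)"
  shows "qform n (x + y) = qform n x + qform n y + bform n x y"
proof -
  have idx: "2*i-1 < qdim n" "2*i < qdim n" if "i \<in> {1..n}" for i
    using that by (auto simp: qdim_def)
  have "(\<Sum>i\<in>{1..n}. (x + y) $ (2*i-1) * (x + y) $ (2*i))
      = (\<Sum>i\<in>{1..n}. x $ (2*i-1) * x $ (2*i)) + (\<Sum>i\<in>{1..n}. y $ (2*i-1) * y $ (2*i))
        + (\<Sum>i\<in>{1..n}. x $ (2*i-1) * y $ (2*i) + x $ (2*i) * y $ (2*i-1))"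
    unfolding sum.distrib[symmetric] using x y idx by (intro sum.cong) (auto simp: algebra_simps)
  then show ?thesis
    using x y unfolding qform_def bform_pairs[OF y] by (simp add: power2_eq_square algebra_simps)
qed

lemma qform_smult:
  assumes x: "x \<in> carrier_vec (qdim n)"
  shows "qform n (c \<cdot>\<^sub>v x) = c^2 * qform n x"
proof -
  have idx: "2*i-1 < qdim n" "2*i < qdim n" if "i \<in> {1..n}" for i
    using that by (auto simp: qdim_def)
  have "(\<Sum>i\<in>{1..n}. (c \<cdot>\<^sub>v x) $ (2*i-1) * (c \<cdot>\<^sub>v x) $ (2*i))
      = c^2 * (\<Sum>i\<in>{1..n}. x $ (2*i-1) * x $ (2*i))"
    unfolding sum_distrib_left using x idx by (intro sum.cong) (auto simp: power2_eq_square)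
  then show ?thesis
    using x unfolding qform_def by (simp add: power2_eq_square algebra_simps)
qed

lemma qform_uminus:
  assumes x: "x \<in> carrier_vec (qdim n)"
  shows "qform n (- x) = qform n x"
proof -
  have "- x = (-1) \<cdot>\<^sub>v x" using x by (intro eq_vecI) auto
  then show ?thesis using qform_smult[OF x, of "-1"] by simp
qed

lemma qform_diff:
  "x \<in> carrier_vec (qdim n) \<Longrightarrow> y \<in> carrier_vec (qdim n) \<Longrightarrow>
   qform n (x - y) = qform n x + qform n y - bform n x y"
  using qform_add[of x n "- y"] by (simp add: qform_uminus minus_add_uminus_vec)

lemma bform_self: "x \<in> carrier_vec (qdim n) \<Longrightarrow> bform n x x = 2 * qform n x"
  unfolding bform_pairs qform_def by (simp add: power2_eq_square sum_distrib_left algebra_simps)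

lemma qform_unit: "k < qdim n \<Longrightarrow> qform n (unit_vec (qdim n) k) = (if k = 0 then 1 else 0)"
  unfolding qform_def qdim_def by (auto intro!: sum.neutral)

lemma qform_zero [simp]: "qform n (0\<^sub>v (qdim n)) = 0"
  unfolding qform_def qdim_def by (auto intro!: sum.neutral)

section \<open>Eichler--Siegel--Dickson transvections\<close>

definition esd_admissible :: "nat \<Rightarrow> 'a::comm_ring_1 vec \<Rightarrow> 'a vec \<Rightarrow> bool" where
  "esd_admissible n u v \<longleftrightarrow>
     u \<in> carrier_vec (qdim n) \<and> v \<in> carrier_vec (qdim n) \<and> qform n u = 0 \<and> bform n u v = 0"

lemma esd_admissibleD:
  assumes "esd_admissible n u v"
  shows "u \<in> carrier_vec (qdim n)" "v \<in> carrier_vec (qdim n)" "qform n u = 0"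
    "bform n u u = 0" "bform n u v = 0" "bform n v u = 0"
  using assms bform_self[of u n] bform_sym[of u n v] unfolding esd_admissible_def by auto

lemma esd_carrier [simp]:
  "u \<in> carrier_vec (qdim n) \<Longrightarrow> v \<in> carrier_vec (qdim n) \<Longrightarrow> x \<in> carrier_vec (qdim n) \<Longrightarrow>
   esd n u v x \<in> carrier_vec (qdim n)"
  unfolding esd_def by simp

lemma esd_dim [simp]: "u \<in> carrier_vec (qdim n) \<Longrightarrow> dim_vec (esd n u v x) = qdim n"
  unfolding esd_def by simp

lemma esd_index:
  assumes "u \<in> carrier_vec (qdim n)" "v \<in> carrier_vec (qdim n)" "x \<in> carrier_vec (qdim n)"
    and "i < qdim n"
  shows "esd n u v x $ i
    = x $ i + bform n v x * u $ i - bform n u x * v $ i - qform n v * bform n u x * u $ i"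
  using assms unfolding esd_def by simp

lemma bform_esd:
  assumes "u \<in> carrier_vec (qdim n)" "v \<in> carrier_vec (qdim n)" "x \<in> carrier_vec (qdim n)"
    and "y \<in> carrier_vec (qdim n)"
  shows "bform n y (esd n u v x) = bform n y x + bform n v x * bform n y u - bform n u x * bform n y v
      - qform n v * bform n u x * bform n y u"
    and "bform n (esd n u v x) y = bform n x y + bform n v x * bform n u y - bform n u x * bform n v y
      - qform n v * bform n u x * bform n u y"
  using assms unfolding esd_def by simp_all

lemma bform_esd_esd:
  assumes "esd_admissible n u v" "x \<in> carrier_vec (qdim n)" "y \<in> carrier_vec (qdim n)"
  shows "bform n (esd n u v x) (esd n u v y) = bform n x y"
  using assms esd_admissibleD[OF assms(1)] bform_self[of v n]
  by (simp add: bform_esd bform_sym[of x n u] bform_sym[of x n v] bform_sym[of y n u]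
      bform_sym[of y n v] bform_sym[of y n x] algebra_simps)

lemma qform_esd:
  assumes "esd_admissible n u v" "x \<in> carrier_vec (qdim n)"
  shows "qform n (esd n u v x) = qform n x"
  using assms esd_admissibleD[OF assms(1)] bform_self[of v n]
  unfolding esd_def
  by (simp add: qform_add qform_diff qform_smult bform_sym[of x n u] bform_sym[of x n v]
      power2_eq_square algebra_simps)

lemma esd_mat_carrier [simp]: "esd_mat n u v \<in> carrier_mat (qdim n) (qdim n)"
  unfolding esd_mat_def qdim_def by simp

lemma esd_mat_dim [simp]: "dim_row (esd_mat n u v) = qdim n" "dim_col (esd_mat n u v) = qdim n"
  unfolding esd_mat_def qdim_def by simp_all

lemma esd_mat_index:
  assumes "u \<in> carrier_vec (qdim n)" "v \<in> carrier_vec (qdim n)" "i < qdim n" "j < qdim n"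
  shows "esd_mat n u v $$ (i,j) = (if i = j then 1 else 0)
    + phi_coeff j * (v $ partner j * u $ i - u $ partner j * v $ i - qform n v * u $ partner j * u $ i)"
proof -
  have "esd_mat n u v $$ (i,j) = esd n u v (unit_vec (qdim n) j) $ i"
    using assms(3,4) unfolding esd_mat_def qdim_def by simp
  then show ?thesis
    using assms by (simp add: esd_index bform_unit_right algebra_simps)
qed

lemma esd_mat_mult_vec:
  assumes u: "u \<in> carrier_vec (qdim n)" and v: "v \<in> carrier_vec (qdim n)"
    and x: "x \<in> carrier_vec (qdim n)"
  shows "esd_mat n u v *\<^sub>v x = esd n u v x"
proof (rule eq_vecI)
  fix i assume "i < dim_vec (esd n u v x)"
  then have i: "i < qdim n" using u v x by simp
  let ?b = "\<lambda>y j. phi_coeff j * x $ j * y $ partner j"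
  have "(esd_mat n u v *\<^sub>v x) $ i = (\<Sum>j<qdim n. esd_mat n u v $$ (i,j) * x $ j)"
    using i x by (simp add: scalar_prod_def row_def lessThan_atLeast0)
  also have "\<dots> = (\<Sum>j<qdim n. (if j = i then x $ j else 0)
      + ?b v j * u $ i - ?b u j * v $ i - qform n v * ?b u j * u $ i)"
    using u v i by (intro sum.cong) (auto simp: esd_mat_index algebra_simps)
  also have "\<dots> = x $ i + bform n x v * u $ i - bform n x u * v $ i - qform n v * bform n x u * u $ i"
    using u v i
    by (simp add: bform_coord sum.distrib sum_subtractf sum_distrib_left sum_distrib_right)
  finally show "(esd_mat n u v *\<^sub>v x) $ i = esd n u v x $ i"
    using u v x i by (simp add: esd_index bform_sym[of x n u] bform_sym[of x n v])
qed (use u v x in simp)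

lemma mat_eqI_mult_vec:
  fixes A B :: "'a::semiring_1 mat"
  assumes "A \<in> carrier_mat m m" "B \<in> carrier_mat m m"
    and "\<And>x. x \<in> carrier_vec m \<Longrightarrow> A *\<^sub>v x = B *\<^sub>v x"
  shows "A = B"
proof (rule eq_matI)
  fix i j assume "i < dim_row B" "j < dim_col B"
  then show "A $$ (i,j) = B $$ (i,j)"
    using assms assms(3)[of "unit_vec m j"] by (metis carrier_matD index_mult_mat_vec
      scalar_prod_right_unit row_carrier_vec index_row(1) unit_vec_carrier)
qed (use assms in auto)

lemmas assoc_mult_esd_mat_vec =
  assoc_mult_mat_vec[of "esd_mat n u v" "qdim n" "qdim n" "esd_mat n u' v'" "qdim n"] for n u v u' v'

lemma esd_mat_mult:
  assumes uv: "esd_admissible n u v" and uw: "esd_admissible n u w"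
  shows "esd_mat n u v * esd_mat n u w = esd_mat n u (v + w)"
proof (rule mat_eqI_mult_vec)
  note facts = esd_admissibleD[OF uv] esd_admissibleD[OF uw]
  fix x :: "'a vec" assume x: "x \<in> carrier_vec (qdim n)"
  have "esd n u v (esd n u w x) = esd n u (v + w) x"
    using x facts
    by (intro eq_vecI) (simp_all add: esd_index bform_esd qform_add algebra_simps)
  then show "esd_mat n u v * esd_mat n u w *\<^sub>v x = esd_mat n u (v + w) *\<^sub>v x"
    using x facts by (simp add: esd_mat_mult_vec assoc_mult_esd_mat_vec)
qed (auto intro: mult_carrier_mat)

lemma esd_mat_conj:
  assumes ab: "esd_admissible n a b"
    and u: "u \<in> carrier_vec (qdim n)" and v: "v \<in> carrier_vec (qdim n)"
  shows "esd_mat n a b * esd_mat n u v = esd_mat n (esd n a b u) (esd n a b v) * esd_mat n a b"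
proof (rule mat_eqI_mult_vec)
  note facts = esd_admissibleD[OF ab]
  fix x :: "'a vec" assume x: "x \<in> carrier_vec (qdim n)"
  let ?g = "esd n a b"
  have "?g (esd n u v x) $ i = esd n (?g u) (?g v) (?g x) $ i" if i: "i < qdim n" for i
  proof -
    have "esd n (?g u) (?g v) (?g x) $ i
        = ?g x $ i + bform n v x * ?g u $ i - bform n u x * ?g v $ i - qform n v * bform n u x * ?g u $ i"
      using x u v i facts by (simp add: esd_index bform_esd_esd[OF ab] qform_esd[OF ab])
    then show ?thesis
      using x u v i facts by (simp add: esd_index bform_esd algebra_simps)
  qed
  then have "?g (esd n u v x) = esd n (?g u) (?g v) (?g x)"
    using x u v facts by (intro eq_vecI) simp_all
  then show "esd_mat n a b * esd_mat n u v *\<^sub>v x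
      = esd_mat n (esd n a b u) (esd n a b v) * esd_mat n a b *\<^sub>v x"
    using x u v facts by (simp add: esd_mat_mult_vec assoc_mult_esd_mat_vec)
qed (auto intro: mult_carrier_mat)

lemma esd_mat_swap:
  assumes u: "u \<in> carrier_vec (qdim n)" and v: "v \<in> carrier_vec (qdim n)"
    and "qform n u = 0" "qform n v = 0"
  shows "esd_mat n u v = esd_mat n v (- u)"
proof (rule mat_eqI_mult_vec)
  fix x :: "'a vec" assume x: "x \<in> carrier_vec (qdim n)"
  have "esd n u v x = esd n v (- u) x"
    using assms x by (intro eq_vecI) (simp_all add: esd_index qform_uminus algebra_simps)
  then show "esd_mat n u v *\<^sub>v x = esd_mat n v (- u) *\<^sub>v x"
    using u v x by (simp add: esd_mat_mult_vec)
qed simp_all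

lemma esd_mat_smult_left:
  assumes u: "u \<in> carrier_vec (qdim n)" and v: "v \<in> carrier_vec (qdim n)"
  shows "esd_mat n (c \<cdot>\<^sub>v u) v = esd_mat n u (c \<cdot>\<^sub>v v)"
proof (rule mat_eqI_mult_vec)
  fix x :: "'a vec" assume x: "x \<in> carrier_vec (qdim n)"
  have "esd n (c \<cdot>\<^sub>v u) v x = esd n u (c \<cdot>\<^sub>v v) x"
    using assms x
    by (intro eq_vecI) (simp_all add: esd_index qform_smult power2_eq_square algebra_simps)
  then show "esd_mat n (c \<cdot>\<^sub>v u) v *\<^sub>v x = esd_mat n u (c \<cdot>\<^sub>v v) *\<^sub>v x"
    using u v x by (simp add: esd_mat_mult_vec)
qed simp_all

lemma esd_mat_add_smult:
  assumes uv: "esd_admissible n u v"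
  shows "esd_mat n u (v + c \<cdot>\<^sub>v u) = esd_mat n u v"
proof (rule mat_eqI_mult_vec)
  note facts = esd_admissibleD[OF uv]
  fix x :: "'a vec" assume x: "x \<in> carrier_vec (qdim n)"
  have "esd n u (v + c \<cdot>\<^sub>v u) x = esd n u v x"
    using facts x
    by (intro eq_vecI) (simp_all add: esd_index qform_add qform_smult algebra_simps)
  then show "esd_mat n u (v + c \<cdot>\<^sub>v u) *\<^sub>v x = esd_mat n u v *\<^sub>v x"
    using facts x by (simp add: esd_mat_mult_vec)
qed simp_all

lemma esd_mat_zero:
  assumes u: "u \<in> carrier_vec (qdim n)"
  shows "esd_mat n u (0\<^sub>v (qdim n)) = 1\<^sub>m (qdim n)"
proof (rule mat_eqI_mult_vec)
  fix x :: "'a vec" assume x: "x \<in> carrier_vec (qdim n)"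
  have "esd n u (0\<^sub>v (qdim n)) x = x"
    using u x by (intro eq_vecI) (simp_all add: esd_index)
  then show "esd_mat n u (0\<^sub>v (qdim n)) *\<^sub>v x = 1\<^sub>m (qdim n) *\<^sub>v x"
    using u x by (simp add: esd_mat_mult_vec)
qed simp_all

lemma esd_mat_inverse:
  assumes uv: "esd_admissible n u v"
  shows "esd_mat n u v * esd_mat n u (- v) = 1\<^sub>m (qdim n)"
    and "esd_mat n u (- v) * esd_mat n u v = 1\<^sub>m (qdim n)"
proof -
  note facts = esd_admissibleD[OF uv]
  have uv': "esd_admissible n u (- v)"
    using facts unfolding esd_admissible_def by simp
  have "v + - v = 0\<^sub>v (qdim n)" "- v + v = 0\<^sub>v (qdim n)"
    using facts by auto
  then show "esd_mat n u v * esd_mat n u (- v) = 1\<^sub>m (qdim n)"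
    and "esd_mat n u (- v) * esd_mat n u v = 1\<^sub>m (qdim n)"
    using esd_mat_mult[OF uv uv'] esd_mat_mult[OF uv' uv] esd_mat_zero[OF facts(1)] by simp_all
qed

section \<open>The elementary orthogonal group\<close>

lemma munit_dim [simp]: "dim_row (munit N a b) = N" "dim_col (munit N a b) = N"
  unfolding munit_def by simp_all

lemma munit_index [simp]:
  "r < N \<Longrightarrow> s < N \<Longrightarrow> munit N a b $$ (r,s) = (if r = a \<and> s = b then 1 else 0)"
  unfolding munit_def by simp

lemma EO_gens_carrier: "G \<in> EO_gens n \<Longrightarrow> G \<in> carrier_mat (qdim n) (qdim n)"
  unfolding EO_gens_def F1_def F2_def qdim_def
  by (auto intro!: add_carrier_mat smult_carrier_mat minus_carrier_mat)

lemma EO_carrier: "A \<in> EO n \<Longrightarrow> A \<in> carrier_mat (qdim n) (qdim n)"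
  by (induction rule: EO.induct) (auto simp: qdim_def dest: EO_gens_carrier)

lemma one_in_EO: "1\<^sub>m (qdim n) \<in> EO n"
  unfolding qdim_def by (rule EO_one)

lemma EO_gens_in_EO: "G \<in> EO_gens n \<Longrightarrow> G \<in> EO n"
  using EO_gen[OF one_in_EO, of G n] EO_gens_carrier[of G n] by simp

lemma EO_mult:
  assumes "A \<in> EO n" "B \<in> EO n"
  shows "A * B \<in> EO n"
  using assms(2)
proof (induction B rule: EO.induct)
  case EO_one
  then show ?case using assms(1) EO_carrier[OF assms(1)] by (simp add: qdim_def)
next
  case (EO_gen B G)
  have "A * (B * G) = A * B * G"
    using EO_carrier[OF assms(1)] EO_carrier[OF EO_gen.hyps(1)] EO_gens_carrier[OF EO_gen.hyps(2)]
    by (simp add: assoc_mult_mat[of _ "qdim n" "qdim n" _ "qdim n" _ "qdim n"])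
  then show ?case using EO.EO_gen[OF EO_gen.IH EO_gen.hyps(2)] by simp
next
  case (EO_inv B G C)
  have "A * (B * C) = A * B * C"
    using EO_carrier[OF assms(1)] EO_carrier[OF EO_inv.hyps(1)] EO_inv.hyps(3)
    by (simp add: assoc_mult_mat[of _ "qdim n" "qdim n" _ "qdim n" _ "qdim n"] qdim_def)
  then show ?case using EO.EO_inv[OF EO_inv.IH EO_inv.hyps(2-5)] by simp
qed

lemma esd_mat_conj_in_EO:
  assumes ab: "esd_admissible n a b"
    and g: "esd_mat n a b \<in> EO n" and g': "esd_mat n a (- b) \<in> EO n"
    and u: "u \<in> carrier_vec (qdim n)" and v: "v \<in> carrier_vec (qdim n)"
    and X: "esd_mat n u v \<in> EO n"
  shows "esd_mat n (esd n a b u) (esd n a b v) \<in> EO n"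
proof -
  let ?g = "esd_mat n a b" and ?g' = "esd_mat n a (- b)"
    and ?Y = "esd_mat n (esd n a b u) (esd n a b v)"
  have "?Y = ?Y * (?g * ?g')" using esd_mat_inverse(1)[OF ab] by simp
  also have "\<dots> = ?Y * ?g * ?g'"
    by (simp add: assoc_mult_mat[of _ "qdim n" "qdim n" _ "qdim n" _ "qdim n"])
  also have "?Y * ?g = ?g * esd_mat n u v" using esd_mat_conj[OF ab u v] by simp
  finally show ?thesis using EO_mult[OF EO_mult[OF g X] g'] by simp
qed

lemma esd_mat_unit_e0_eq:
  assumes k: "k < qdim n" "k \<noteq> 0"
  shows "esd_mat n (unit_vec (qdim n) k) ((-l) \<cdot>\<^sub>v unit_vec (qdim n) 0)
    = 1\<^sub>m (qdim n) + l \<cdot>\<^sub>m (munit (qdim n) 0 (partner k) - 2 \<cdot>\<^sub>m munit (qdim n) k 0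
        - l \<cdot>\<^sub>m munit (qdim n) k (partner k))"
proof (rule eq_matI)
  fix r s assume "r < dim_row (1\<^sub>m (qdim n) + l \<cdot>\<^sub>m (munit (qdim n) 0 (partner k)
      - 2 \<cdot>\<^sub>m munit (qdim n) k 0 - l \<cdot>\<^sub>m munit (qdim n) k (partner k)))"
    and "s < dim_col (1\<^sub>m (qdim n) + l \<cdot>\<^sub>m (munit (qdim n) 0 (partner k)
      - 2 \<cdot>\<^sub>m munit (qdim n) k 0 - l \<cdot>\<^sub>m munit (qdim n) k (partner k)))"
  then show "esd_mat n (unit_vec (qdim n) k) ((-l) \<cdot>\<^sub>v unit_vec (qdim n) 0) $$ (r,s)
      = (1\<^sub>m (qdim n) + l \<cdot>\<^sub>m (munit (qdim n) 0 (partner k) - 2 \<cdot>\<^sub>m munit (qdim n) k 0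
        - l \<cdot>\<^sub>m munit (qdim n) k (partner k))) $$ (r,s)"
    using k partner_neq[of k]
    by (auto simp: esd_mat_index qform_smult qform_unit partner_eq_iff power2_eq_square)
qed simp_all

lemma esd_mat_unit_e0_in_EO:
  assumes k: "k < qdim n" "k \<noteq> 0"
  shows "esd_mat n (unit_vec (qdim n) k) (c \<cdot>\<^sub>v unit_vec (qdim n) 0) \<in> EO n"
proof -
  let ?G = "1\<^sub>m (qdim n) + (-c) \<cdot>\<^sub>m (munit (qdim n) 0 (partner k) - 2 \<cdot>\<^sub>m munit (qdim n) k 0
      - (-c) \<cdot>\<^sub>m munit (qdim n) k (partner k))"
  have "?G \<in> EO_gens n"
  proof (cases "odd k")
    case True
    define i where "i = (k + 1) div 2"
    have i: "k = 2*i-1" "partner k = 2*i" "1 \<le> i" "i \<le> n"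
      using True k unfolding i_def partner_def qdim_def by (auto elim!: oddE)
    then have "?G = F1 (2*n+1) i (-c)" unfolding F1_def qdim_def by simp
    with i show ?thesis unfolding EO_gens_def by blast
  next
    case False
    define i where "i = k div 2"
    have i: "k = 2*i" "partner k = 2*i-1" "1 \<le> i" "i \<le> n"
      using False k unfolding i_def partner_def qdim_def by (auto elim!: evenE)
    then have "?G = F2 (2*n+1) i (-c)" unfolding F2_def qdim_def by simp
    with i show ?thesis unfolding EO_gens_def by blast
  qed
  then show ?thesis using esd_mat_unit_e0_eq[OF k, of "-c"] EO_gens_in_EO by simp
qed

section \<open>Directions of elementary transvections\<close>

definition EO_directions :: "nat \<Rightarrow> 'a::comm_ring_1 vec \<Rightarrow> 'a vec set" where
  "EO_directions n u = {v. esd_admissible n u v \<and> esd_mat n u v \<in> EO n}"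

lemma zero_in_EO_directions:
  "u \<in> carrier_vec (qdim n) \<Longrightarrow> qform n u = 0 \<Longrightarrow> 0\<^sub>v (qdim n) \<in> EO_directions n u"
  unfolding EO_directions_def esd_admissible_def by (simp add: esd_mat_zero one_in_EO)

lemma add_in_EO_directions:
  assumes "v \<in> EO_directions n u" "w \<in> EO_directions n u"
  shows "v + w \<in> EO_directions n u"
proof -
  have uv: "esd_admissible n u v" and uw: "esd_admissible n u w"
    using assms unfolding EO_directions_def by auto
  then have "esd_admissible n u (v + w)"
    using esd_admissibleD[OF uv] esd_admissibleD[OF uw] unfolding esd_admissible_def by simp
  moreover have "esd_mat n u (v + w) \<in> EO n"
    using esd_mat_mult[OF uv uw] EO_mult assms unfolding EO_directions_def by fastforce
  ultimately show ?thesis unfolding EO_directions_def by simp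
qed

lemma sum_in_EO_directions:
  assumes u: "u \<in> carrier_vec (qdim n)" "qform n u = 0"
    and "finite K" "\<And>k. k \<in> K \<Longrightarrow> f k \<in> EO_directions n u"
  shows "vec (qdim n) (\<lambda>i. \<Sum>k\<in>K. f k $ i) \<in> EO_directions n u"
  using assms(3,4)
proof (induction K rule: finite_induct)
  case empty
  have "vec (qdim n) (\<lambda>i. \<Sum>k\<in>{}. f k $ i) = 0\<^sub>v (qdim n)" by auto
  then show ?case using zero_in_EO_directions[OF u] by simp
next
  case (insert k K)
  have "f k \<in> carrier_vec (qdim n)"
    using insert.prems esd_admissibleD(2) unfolding EO_directions_def by blast
  then have "vec (qdim n) (\<lambda>i. \<Sum>k\<in>insert k K. f k $ i) = f k + vec (qdim n) (\<lambda>i. \<Sum>k\<in>K. f k $ i)"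
    using insert.hyps by auto
  moreover have "f k \<in> EO_directions n u" "vec (qdim n) (\<lambda>i. \<Sum>k\<in>K. f k $ i) \<in> EO_directions n u"
    using insert by simp_all
  ultimately show ?case using add_in_EO_directions by simp
qed

lemma add_smult_in_EO_directions_iff:
  assumes uv: "esd_admissible n u v"
  shows "v + c \<cdot>\<^sub>v u \<in> EO_directions n u \<longleftrightarrow> v \<in> EO_directions n u"
proof -
  have "esd_admissible n u (v + c \<cdot>\<^sub>v u)"
    using esd_admissibleD[OF uv] unfolding esd_admissible_def by simp
  then show ?thesis using uv esd_mat_add_smult[OF uv] unfolding EO_directions_def by simp
qed

lemma in_EO_directions_swap:
  assumes "u \<in> carrier_vec (qdim n)" "z \<in> carrier_vec (qdim n)" "qform n u = 0" "qform n z = 0"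
    and "bform n u z = 0"
  shows "z \<in> EO_directions n u \<longleftrightarrow> - u \<in> EO_directions n z"
  using assms esd_mat_swap[of u n z] bform_sym[of u n z]
  unfolding EO_directions_def esd_admissible_def by (simp add: qform_uminus)

lemma in_EO_directions_coordinatewise:
  assumes u: "u \<in> carrier_vec (qdim n)" "qform n u = 0" and x: "x \<in> carrier_vec (qdim n)"
    and coord: "\<And>j. j < qdim n \<Longrightarrow> x $ j \<cdot>\<^sub>v unit_vec (qdim n) j \<in> EO_directions n u"
  shows "x \<in> EO_directions n u"
proof -
  have "vec (qdim n) (\<lambda>i. \<Sum>j<qdim n. (x $ j \<cdot>\<^sub>v unit_vec (qdim n) j) $ i) = x"
    using x by (intro eq_vecI) (auto simp: if_distrib[of "\<lambda>t. _ * t"] cong: if_cong)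
  then show ?thesis
    using sum_in_EO_directions[OF u finite_lessThan[of "qdim n"], where f = "\<lambda>j. x $ j \<cdot>\<^sub>v unit_vec (qdim n) j"] coord
    by simp
qed

section \<open>Vectors orthogonal to u\<close>

(* <u,e_b> e_a - <u,e_a> e_b for a, b <> 0, i.e. the contraction of e_a /\ e_b with u. *)
definition wedge_orth :: "nat \<Rightarrow> 'a::comm_ring_1 vec \<Rightarrow> nat \<Rightarrow> nat \<Rightarrow> 'a vec" where
  "wedge_orth n u a b = u $ partner b \<cdot>\<^sub>v unit_vec (qdim n) a - u $ partner a \<cdot>\<^sub>v unit_vec (qdim n) b"

lemma wedge_orth_carrier [simp]: "wedge_orth n u a b \<in> carrier_vec (qdim n)"
  and wedge_orth_dim [simp]: "dim_vec (wedge_orth n u a b) = qdim n"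
  unfolding wedge_orth_def by simp_all

lemma wedge_orth_index:
  "i < qdim n \<Longrightarrow> a < qdim n \<Longrightarrow> b < qdim n \<Longrightarrow>
   wedge_orth n u a b $ i = (if i = a then u $ partner b else 0) - (if i = b then u $ partner a else 0)"
  unfolding wedge_orth_def by simp

lemma bform_wedge_orth:
  assumes "u \<in> carrier_vec (qdim n)" "a < qdim n" "a \<noteq> 0" "b < qdim n" "b \<noteq> 0"
  shows "bform n u (wedge_orth n u a b) = 0"
  using assms unfolding wedge_orth_def by (simp add: bform_unit_right algebra_simps)

lemma qform_wedge_orth:
  assumes "a < qdim n" "a \<noteq> 0" "b < qdim n" "b \<noteq> 0" "b \<noteq> partner a"
  shows "qform n (wedge_orth n u a b) = 0"
  using assms unfolding wedge_orth_def
  by (simp add: qform_diff qform_smult qform_unit bform_unit_left)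

lemma exists_hyperbolic_pair_avoiding:
  assumes "3 \<le> n"
  shows "\<exists>r < qdim n. r \<noteq> 0 \<and> {r, partner r} \<inter> {a, b, partner a, partner b} = {}"
proof -
  define p :: "nat \<Rightarrow> nat" where "p k = (k + 1) div 2" for k
  have p_partner: "p (partner k) = p k" for k
    unfolding p_def partner_def by (auto elim!: oddE evenE)
  obtain t where t: "t \<in> {1, 2, 3}" "t \<noteq> p a" "t \<noteq> p b"
    by (metis insertCI numeral_One numeral_eq_iff semiring_norm(86) semiring_norm(89)
        Suc_1 n_not_Suc_n numeral_3_eq_3)
  define r where "r = 2*t - 1"
  have r: "r < qdim n" "r \<noteq> 0" "p r = t" "p (partner r) = t"
    using t(1) assms p_partner[of r] unfolding r_def p_def qdim_def by auto
  then have "{r, partner r} \<inter> {a, b, partner a, partner b} = {}"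
    using t p_partner by (auto simp: partner_eq_iff)
  with r show ?thesis by blast
qed

definition off_pair :: "nat \<Rightarrow> nat \<Rightarrow> nat set" where
  "off_pair n a = {d. d < qdim n \<and> d \<noteq> 0 \<and> d \<noteq> a \<and> d \<noteq> partner a}"

lemma finite_off_pair [simp]: "finite (off_pair n a)"
  unfolding off_pair_def by simp

lemma sum_split_off_pair:
  assumes "a < qdim n" "a \<noteq> 0"
  shows "(\<Sum>k<qdim n. g k) = g 0 + g a + g (partner a) + (\<Sum>d\<in>off_pair n a. g d)"
proof -
  have "{..<qdim n} = insert 0 (insert a (insert (partner a) (off_pair n a)))"
    using assms unfolding off_pair_def by auto
  then show ?thesis using assms partner_neq[of a] by (simp add: off_pair_def add.assoc)
qed

lemma sum_off_pair_partner: "(\<Sum>d\<in>off_pair n a. g (partner d)) = (\<Sum>d\<in>off_pair n a. g d)"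
  by (rule sum.reindex_bij_witness[of _ partner partner]) (auto simp: off_pair_def partner_eq_iff)

lemma sum_off_pair_isotropic:
  assumes u: "u \<in> carrier_vec (qdim n)" "qform n u = 0" "u $ 0 = 0" and a: "a < qdim n" "a \<noteq> 0"
  shows "(\<Sum>d\<in>off_pair n a. u $ d * u $ partner d) = - (2 * (u $ a * u $ partner a))"
proof -
  have "(\<Sum>d\<in>off_pair n a. phi_coeff d * u $ d * u $ partner d)
      = (\<Sum>d\<in>off_pair n a. u $ d * u $ partner d)"
    by (intro sum.cong) (auto simp: off_pair_def)
  then have "0 = 2 * (u $ a * u $ partner a) + (\<Sum>d\<in>off_pair n a. u $ d * u $ partner d)"
    using bform_self[OF u(1)] u(2,3) a
    unfolding bform_coord[OF u(1)] sum_split_off_pair[OF a] by (simp add: algebra_simps)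
  then show ?thesis by (simp add: eq_neg_iff_add_eq_0 add.commute)
qed

lemma sum_off_pair_unimodular:
  fixes u w :: "'a::comm_ring_1 vec"
  assumes "u $ 0 = 0" "w \<in> carrier_vec (qdim n)" "u \<bullet> w = 1" and a: "a < qdim n" "a \<noteq> 0"
  shows "(\<Sum>d\<in>off_pair n a. w $ partner d * u $ partner d)
    = 1 - w $ a * u $ a - w $ partner a * u $ partner a"
proof -
  have "u \<bullet> w = (\<Sum>k<qdim n. w $ k * u $ k)"
    using assms(2) unfolding scalar_prod_def by (simp add: lessThan_atLeast0 mult.commute)
  then show ?thesis
    using assms unfolding sum_split_off_pair[OF a] sum_off_pair_partner[where g = "\<lambda>d. w $ d * u $ d"]
    by (simp add: algebra_simps)
qed

(* The coefficients come from u_{d*} z(a,b) = u_{a*} z(d,b) + u_{b*} z(a,d) for z = wedge_orth,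
   summed against w_{d*} and corrected by the isotropy of u. *)
lemma sum_wedge_orth_partner:
  fixes u w :: "'a::comm_ring_1 vec" and c :: 'a
  assumes u: "u \<in> carrier_vec (qdim n)" "qform n u = 0" "u $ 0 = 0"
    and w: "w \<in> carrier_vec (qdim n)" "u \<bullet> w = 1"
    and a: "a < qdim n" "a \<noteq> 0"
  defines "f \<equiv> \<lambda>d. (c * (w $ a * u $ d - w $ partner d * u $ partner a)) \<cdot>\<^sub>v wedge_orth n u (partner a) d
      + (c * (w $ partner d * u $ a - w $ partner a * u $ d)) \<cdot>\<^sub>v wedge_orth n u a d"
  shows "vec (qdim n) (\<lambda>i. \<Sum>d\<in>off_pair n a. f d $ i)
    = c \<cdot>\<^sub>v wedge_orth n u a (partner a) + (c * (w $ partner a * u $ partner a - w $ a * u $ a)) \<cdot>\<^sub>v u"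
proof -
  define a' where "a' = partner a"
  define D where "D = off_pair n a"
  have a': "a' < qdim n" "a' \<noteq> 0" "a' \<noteq> a" "partner a' = a"
    using a partner_neq[of a] unfolding a'_def by auto
  note S1 = sum_off_pair_unimodular[OF u(3) w a, folded a'_def D_def]
  note S2 = sum_off_pair_isotropic[OF u a, folded a'_def D_def]
  have neq: "a \<noteq> a'" "a' \<noteq> a" "a \<noteq> d" "a' \<noteq> d" "0 \<noteq> d" "d \<noteq> 0" if "d \<in> D" for d
    using that a partner_neq[of a] unfolding D_def off_pair_def a'_def by auto
  let ?p = "\<lambda>d. c * (w $ partner d * u $ a - w $ a' * u $ d)"
    and ?q = "\<lambda>d. c * (w $ a * u $ d - w $ partner d * u $ a')"
  have f_index: "f d $ i = (if i = a then ?p d * u $ partner d else 0)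
      + (if i = a' then ?q d * u $ partner d else 0)
      - (if i = d then ?q d * u $ a + ?p d * u $ a' else 0)" if "d \<in> D" "i < qdim n" for d i
    using that a a' neq[OF that(1)] unfolding f_def D_def off_pair_def
    by (auto simp: wedge_orth_index a'_def algebra_simps)
  show ?thesis
    unfolding D_def[symmetric]
  proof (rule eq_vecI)
    fix i assume "i < dim_vec (c \<cdot>\<^sub>v wedge_orth n u a (partner a)
      + (c * (w $ partner a * u $ partner a - w $ a * u $ a)) \<cdot>\<^sub>v u)"
    then have i: "i < qdim n" using u by simp
    have "(\<Sum>d\<in>D. f d $ i)
        = c * ((if i = a then u $ a else 0) - (if i = a' then u $ a' else 0))
          + c * (w $ a' * u $ a' - w $ a * u $ a) * u $ i"
    proof -
      consider "i = a" | "i = a'" | "i = 0" | "i \<in> D" using i unfolding D_def off_pair_def a'_def by auto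
      then show ?thesis
      proof cases
        case 1
        have "(\<Sum>d\<in>D. f d $ i) = (\<Sum>d\<in>D. c * u $ a * (w $ partner d * u $ partner d)
            - c * w $ a' * (u $ d * u $ partner d))"
          using 1 a by (intro sum.cong) (simp_all add: f_index neq algebra_simps)
        also have "\<dots> = c * u $ a * (1 - w $ a * u $ a - w $ a' * u $ a') + 2 * c * w $ a' * u $ a * u $ a'"
          unfolding sum_subtractf sum_distrib_left[symmetric] S1 S2 by (simp add: algebra_simps)
        finally show ?thesis using 1 a' by (simp add: algebra_simps)
      next
        case 2
        have "(\<Sum>d\<in>D. f d $ i) = (\<Sum>d\<in>D. c * w $ a * (u $ d * u $ partner d)
            - c * u $ a' * (w $ partner d * u $ partner d))"
          using 2 a' by (intro sum.cong) (simp_all add: f_index neq algebra_simps)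
        also have "\<dots> = - 2 * c * w $ a * u $ a * u $ a' - c * u $ a' * (1 - w $ a * u $ a - w $ a' * u $ a')"
          unfolding sum_subtractf sum_distrib_left[symmetric] S1 S2 by (simp add: algebra_simps)
        finally show ?thesis using 2 a' by (simp add: algebra_simps)
      next
        case 3
        have "(\<Sum>d\<in>D. f d $ i) = 0"
          using 3 a a' by (intro sum.neutral) (simp add: f_index neq)
        then show ?thesis using 3 a a' u(3) by simp
      next
        case 4
        then have "i \<noteq> a" "i \<noteq> a'" using neq by blast+
        have "(\<Sum>d\<in>D. f d $ i) = (\<Sum>d\<in>D. if d = i then - (?q i * u $ a + ?p i * u $ a') else 0)"
          using i \<open>i \<noteq> a\<close> \<open>i \<noteq> a'\<close> by (intro sum.cong) (auto simp: f_index)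
        then show ?thesis using 4 \<open>i \<noteq> a\<close> \<open>i \<noteq> a'\<close> by (simp add: D_def algebra_simps)
      qed
    qed
    then show "vec (qdim n) (\<lambda>i. \<Sum>d\<in>D. f d $ i) $ i
        = (c \<cdot>\<^sub>v wedge_orth n u a (partner a)
          + (c * (w $ partner a * u $ partner a - w $ a * u $ a)) \<cdot>\<^sub>v u) $ i"
      using i u a a' by (simp add: wedge_orth_index a'_def)
  qed (use u in simp)
qed

lemma sum_wedge_orth_eq:
  fixes u v w :: "'a::comm_ring_1 vec"
  assumes u: "u \<in> carrier_vec (qdim n)" "u $ 0 = 0" and v: "v \<in> carrier_vec (qdim n)" "v $ 0 = 0"
    and w: "w \<in> carrier_vec (qdim n)" "u \<bullet> w = 1" and uv: "bform n u v = 0"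
  defines "H \<equiv> {1..<qdim n}"
  shows "vec (qdim n) (\<lambda>i. \<Sum>p\<in>H \<times> H. ((v $ fst p * w $ snd p) \<cdot>\<^sub>v wedge_orth n u (fst p) (partner (snd p))) $ i) = v"
proof (rule eq_vecI)
  have H: "finite H" "{..<qdim n} = insert 0 H" "0 \<notin> H" and H_iff: "k \<in> H \<longleftrightarrow> k < qdim n \<and> k \<noteq> 0" for k
    unfolding H_def by auto
  have uw: "(\<Sum>k\<in>H. w $ k * u $ k) = 1"
    using w u(2) H unfolding scalar_prod_def by (simp add: lessThan_atLeast0[symmetric] mult.commute)
  have vu: "(\<Sum>a\<in>H. v $ a * u $ partner a) = 0"
  proof -
    have "(\<Sum>a\<in>H. phi_coeff a * v $ a * u $ partner a) = (\<Sum>a\<in>H. v $ a * u $ partner a)"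
      by (intro sum.cong) (auto simp: H_iff)
    then show ?thesis
      using uv bform_sym[OF u(1) v(1)] v(2) H unfolding bform_coord[OF u(1)] by simp
  qed
  fix i assume "i < dim_vec v"
  then have i: "i < qdim n" using v by simp
  have "(\<Sum>p\<in>H \<times> H. ((v $ fst p * w $ snd p) \<cdot>\<^sub>v wedge_orth n u (fst p) (partner (snd p))) $ i)
      = (\<Sum>a\<in>H. \<Sum>k\<in>H. (if a = i then v $ a * (w $ k * u $ k) else 0)
          - (if k = partner i then w $ k * (v $ a * u $ partner a) else 0))"
    unfolding sum.cartesian_product using i
    by (intro sum.cong refl) (auto simp: wedge_orth_index H_iff partner_eq_iff algebra_simps)
  also have "\<dots> = (if i \<in> H then v $ i else 0)
      - (if partner i \<in> H then w $ partner i * (\<Sum>a\<in>H. v $ a * u $ partner a) else 0)"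
    using H(1) by (simp add: sum_subtractf sum.delta sum.delta' sum_distrib_left[symmetric] uw
      sum.swap[of _ H H])
  also have "\<dots> = v $ i" using i v(2) vu by (auto simp: H_iff)
  finally show "vec (qdim n) (\<lambda>i. \<Sum>p\<in>H \<times> H. ((v $ fst p * w $ snd p) \<cdot>\<^sub>v wedge_orth n u (fst p) (partner (snd p))) $ i) $ i
      = v $ i" using i by simp
qed (use v in simp)

section \<open>Membership in EO\<close>

context
  fixes h :: "'a::comm_ring_1"
  assumes half: "2 * h = 1"
begin

lemma smult_unit_in_EO_directions_unit:
  fixes c :: 'a
  assumes k: "k < qdim n" "k \<noteq> 0" and m: "m < qdim n" "m \<noteq> 0" "m \<noteq> k" "m \<noteq> partner k"
  shows "c \<cdot>\<^sub>v unit_vec (qdim n) m \<in> EO_directions n (unit_vec (qdim n) k)"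
proof -
  \<comment> \<open>conjugate the generator sigma_{e_k, c e_0} by sigma_{e_m, h e_0}\<close>
  let ?e = "unit_vec (qdim n)"
  have km: "k \<noteq> partner m" using m by (metis partner_partner)
  have adm: "esd_admissible n (?e m) (h \<cdot>\<^sub>v ?e 0)"
    using m unfolding esd_admissible_def by (simp add: qform_unit bform_unit_left)
  have "esd_mat n (?e m) (h \<cdot>\<^sub>v ?e 0) \<in> EO n" "esd_mat n (?e m) (- (h \<cdot>\<^sub>v ?e 0)) \<in> EO n"
  proof -
    have "- (h \<cdot>\<^sub>v ?e 0) = (-h) \<cdot>\<^sub>v ?e 0" by auto
    then show "esd_mat n (?e m) (h \<cdot>\<^sub>v ?e 0) \<in> EO n" "esd_mat n (?e m) (- (h \<cdot>\<^sub>v ?e 0)) \<in> EO n"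
      using esd_mat_unit_e0_in_EO[OF m(1,2)] by simp_all
  qed
  from esd_mat_conj_in_EO[OF adm this _ _ esd_mat_unit_e0_in_EO[OF k, of c]]
  have "esd_mat n (esd n (?e m) (h \<cdot>\<^sub>v ?e 0) (?e k)) (esd n (?e m) (h \<cdot>\<^sub>v ?e 0) (c \<cdot>\<^sub>v ?e 0)) \<in> EO n"
    by simp
  moreover have "esd n (?e m) (h \<cdot>\<^sub>v ?e 0) (?e k) = ?e k"
    using k m km by (intro eq_vecI) (auto simp: esd_index bform_unit_left bform_unit_right)
  moreover have "esd n (?e m) (h \<cdot>\<^sub>v ?e 0) (c \<cdot>\<^sub>v ?e 0) = c \<cdot>\<^sub>v ?e 0 + c \<cdot>\<^sub>v ?e m"
    using k m km half
    by (intro eq_vecI) (auto simp: esd_index bform_unit_left bform_unit_right mult.assoc)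
  ultimately have "c \<cdot>\<^sub>v ?e 0 + c \<cdot>\<^sub>v ?e m \<in> EO_directions n (?e k)"
    using k m km unfolding EO_directions_def esd_admissible_def
    by (simp add: qform_unit bform_unit_left)
  moreover have "(-c) \<cdot>\<^sub>v ?e 0 \<in> EO_directions n (?e k)"
    using k esd_mat_unit_e0_in_EO[OF k] unfolding EO_directions_def esd_admissible_def
    by (simp add: qform_unit bform_unit_left)
  moreover have "(-c) \<cdot>\<^sub>v ?e 0 + (c \<cdot>\<^sub>v ?e 0 + c \<cdot>\<^sub>v ?e m) = c \<cdot>\<^sub>v ?e m"
    by auto
  ultimately show ?thesis using add_in_EO_directions by metis
qed

lemma in_EO_directions_unit:
  fixes x :: "'a vec"
  assumes k: "k < qdim n" "k \<noteq> 0" and x: "x \<in> carrier_vec (qdim n)" "x $ partner k = 0"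
  shows "x \<in> EO_directions n (unit_vec (qdim n) k)"
proof (rule in_EO_directions_coordinatewise)
  let ?e = "unit_vec (qdim n)"
  show "?e k \<in> carrier_vec (qdim n)" "qform n (?e k) = 0" using k by (simp_all add: qform_unit)
  fix j assume j: "j < qdim n"
  consider "j = 0" | "j = k" | "j = partner k" | "j \<noteq> 0" "j \<noteq> k" "j \<noteq> partner k" by blast
  then show "x $ j \<cdot>\<^sub>v ?e j \<in> EO_directions n (?e k)"
  proof cases
    case 1
    then show ?thesis
      using k esd_mat_unit_e0_in_EO[OF k] unfolding EO_directions_def esd_admissible_def
      by (simp add: qform_unit bform_unit_left)
  next
    case 2
    have "esd_admissible n (?e k) (0\<^sub>v (qdim n))"
      using k unfolding esd_admissible_def by (simp add: qform_unit)
    moreover have "0\<^sub>v (qdim n) + x $ j \<cdot>\<^sub>v ?e k = x $ j \<cdot>\<^sub>v ?e j"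
      using 2 by auto
    ultimately show ?thesis
      using add_smult_in_EO_directions_iff zero_in_EO_directions k by (metis qform_unit unit_vec_carrier)
  next
    case 3
    then have "x $ j \<cdot>\<^sub>v ?e j = 0\<^sub>v (qdim n)" using x by auto
    then show ?thesis using zero_in_EO_directions[of "?e k" n] k by (simp add: qform_unit)
  next
    case 4
    then show ?thesis using smult_unit_in_EO_directions_unit k j by simp
  qed
qed (use x in simp)

lemma in_EO_directions_of_support:
  fixes z x :: "'a vec"
  assumes z: "z \<in> carrier_vec (qdim n)" "qform n z = 0" and x: "x \<in> carrier_vec (qdim n)"
    and supp: "\<And>j. j < qdim n \<Longrightarrow> x $ j \<noteq> 0 \<Longrightarrow> j \<noteq> 0 \<and> z $ partner j = 0"
  shows "x \<in> EO_directions n z"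
proof (rule in_EO_directions_coordinatewise[OF z x])
  fix j assume j: "j < qdim n"
  let ?ej = "unit_vec (qdim n) j"
  show "x $ j \<cdot>\<^sub>v ?ej \<in> EO_directions n z"
  proof (cases "x $ j = 0")
    case True
    then have "x $ j \<cdot>\<^sub>v ?ej = 0\<^sub>v (qdim n)" by auto
    then show ?thesis using zero_in_EO_directions[OF z] by simp
  next
    case False
    with supp j have j0: "j \<noteq> 0" and zj: "z $ partner j = 0" by auto
    have "esd_mat n z (x $ j \<cdot>\<^sub>v ?ej) = esd_mat n (x $ j \<cdot>\<^sub>v ?ej) (- z)"
      using z j j0 by (intro esd_mat_swap) (simp_all add: qform_smult qform_unit)
    also have "\<dots> = esd_mat n ?ej (x $ j \<cdot>\<^sub>v (- z))"
      using z j by (intro esd_mat_smult_left) simp_all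
    finally have "esd_mat n z (x $ j \<cdot>\<^sub>v ?ej) \<in> EO n"
      using in_EO_directions_unit[OF j j0, of "x $ j \<cdot>\<^sub>v (- z)"] z j zj
      unfolding EO_directions_def by simp
    then show ?thesis
      using z j zj unfolding EO_directions_def esd_admissible_def by (simp add: bform_unit_right)
  qed
qed

lemma in_EO_directions_if_vanishing_on_pair:
  fixes z w :: "'a vec"
  assumes z: "z \<in> carrier_vec (qdim n)" "qform n z = 0"
    and w: "w \<in> carrier_vec (qdim n)" "qform n w = 0" and wz: "bform n w z = 0"
    and r: "r < qdim n" "r \<noteq> 0"
    and vanish: "z $ r = 0" "z $ partner r = 0" "w $ r = 0" "w $ partner r = 0"
  shows "z \<in> EO_directions n w"
proof -
  \<comment> \<open>conjugating sigma_{e_{r*}, w} by sigma_{e_r, z} gives sigma_{e_{r*} - z, w}\<close>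
  let ?e = "unit_vec (qdim n)" and ?r' = "partner r"
  have r': "?r' < qdim n" "?r' \<noteq> 0" using r by simp_all
  have zD: "z \<in> EO_directions n (?e r)" "- z \<in> EO_directions n (?e r)"
    using in_EO_directions_unit[OF r] z r vanish by simp_all
  have wD: "w \<in> EO_directions n (?e ?r')" "- w \<in> EO_directions n (?e ?r')"
    using in_EO_directions_unit[OF r'] w r vanish by simp_all
  from esd_mat_conj_in_EO[OF _ _ _ _ w(1)] zD wD(1)
  have "esd_mat n (esd n (?e r) z (?e ?r')) (esd n (?e r) z w) \<in> EO n"
    unfolding EO_directions_def by simp
  moreover have "esd n (?e r) z (?e ?r') = ?e ?r' - z"
    using r z vanish by (intro eq_vecI) (auto simp: esd_index bform_unit_left bform_unit_right)
  moreover have "esd n (?e r) z w = w"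
    using r z w vanish wz
    by (intro eq_vecI) (auto simp: esd_index bform_unit_left bform_unit_right bform_sym[of z n w])
  ultimately have "w \<in> EO_directions n (?e ?r' - z)"
    using r' z w vanish wz unfolding EO_directions_def esd_admissible_def
    by (simp add: qform_diff qform_unit bform_unit_left bform_sym[of z n w])
  then have "- (?e ?r' - z) \<in> EO_directions n w"
    using in_EO_directions_swap[of "?e ?r' - z" n w] r' z w vanish wz
    by (simp add: qform_diff qform_unit bform_unit_left bform_sym[of z n w])
  moreover have "?e ?r' \<in> EO_directions n w"
    using in_EO_directions_swap[of w n "?e ?r'"] r r' w vanish wD(2)
    by (simp add: qform_unit bform_unit_right)
  moreover have "?e ?r' + - (?e ?r' - z) = z" using z by auto
  ultimately show ?thesis using add_in_EO_directions by metis
qed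

lemma smult_wedge_orth_in_EO_directions_nonpartner:
  fixes u :: "'a vec"
  assumes n: "3 \<le> n" and u: "u \<in> carrier_vec (qdim n)" "qform n u = 0" "u $ 0 = 0"
    and a: "a < qdim n" "a \<noteq> 0" and b: "b < qdim n" "b \<noteq> 0" "b \<noteq> a" "b \<noteq> partner a"
  shows "c \<cdot>\<^sub>v wedge_orth n u a b \<in> EO_directions n u"
proof -
  \<comment> \<open>sigma_{u,z} = sigma_{z,-u}; the entries of -u at partner a, partner b are treated together\<close>
  let ?e = "unit_vec (qdim n)"
  define z where "z = c \<cdot>\<^sub>v wedge_orth n u a b"
  have z: "z \<in> carrier_vec (qdim n)" "qform n z = 0" "bform n u z = 0"
    using u a b unfolding z_def by (simp_all add: qform_smult qform_wedge_orth bform_wedge_orth)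
  have z_index: "z $ i = 0" if "i < qdim n" "i \<noteq> a" "i \<noteq> b" for i
    using that a b unfolding z_def by (simp add: wedge_orth_index)
  have ab': "partner a \<noteq> partner b" "a \<noteq> partner b" using b by (auto simp: partner_eq_iff)
  define u' where "u' = u $ partner a \<cdot>\<^sub>v ?e (partner a) + u $ partner b \<cdot>\<^sub>v ?e (partner b)"
  have u': "u' \<in> carrier_vec (qdim n)" "qform n u' = 0" "bform n z u' = 0"
    using a b ab' unfolding u'_def z_def wedge_orth_def
    by (simp_all add: qform_add qform_smult qform_unit bform_unit_left bform_unit_right algebra_simps)
  have u'_index: "u' $ i = (if i = partner a then u $ i else 0) + (if i = partner b then u $ i else 0)"
    if "i < qdim n" for i
    using that a b unfolding u'_def by simp
  obtain r where r: "r < qdim n" "r \<noteq> 0" "{r, partner r} \<inter> {a, b, partner a, partner b} = {}"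
    using exists_hyperbolic_pair_avoiding[OF n] by blast
  have "r \<notin> {a, b, partner a, partner b}" "partner r \<notin> {a, b, partner a, partner b}"
    using r(3) by blast+
  then have "z $ r = 0" "z $ partner r = 0" "(- u') $ r = 0" "(- u') $ partner r = 0"
    using r u' u'_index z_index by simp_all
  then have "- u' \<in> EO_directions n z"
    using r u' z by (intro in_EO_directions_if_vanishing_on_pair) (simp_all add: qform_uminus)
  moreover have "- (u - u') \<in> EO_directions n z"
  proof (rule in_EO_directions_of_support[OF z(1,2)])
    fix j assume j: "j < qdim n" "(- (u - u')) $ j \<noteq> 0"
    have "(- (u - u')) $ j = u' $ j - u $ j" using j u u' by simp
    then have "u' $ j \<noteq> u $ j" using j(2) by simp
    moreover have "u' $ 0 = u $ 0" using u'_index[OF qdim_pos] u(3) a b by simp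
    ultimately have "j \<noteq> 0" by metis
    moreover have "j \<noteq> partner a" "j \<noteq> partner b"
      using \<open>u' $ j \<noteq> u $ j\<close> u'_index[OF j(1)] ab' by auto
    ultimately show "j \<noteq> 0 \<and> z $ partner j = 0"
      using j z_index by (auto simp: partner_eq_iff)
  qed (use u u' in simp)
  moreover have "- (u - u') + - u' = - u" using u u' by auto
  ultimately have "- u \<in> EO_directions n z" using add_in_EO_directions by metis
  then show ?thesis using in_EO_directions_swap[OF u(1) z(1) u(2) z(2,3)] unfolding z_def by simp
qed

lemma smult_wedge_orth_partner_in_EO_directions:
  fixes u w :: "'a vec"
  assumes n: "3 \<le> n" and u: "u \<in> carrier_vec (qdim n)" "qform n u = 0" "u $ 0 = 0"
    and w: "w \<in> carrier_vec (qdim n)" "u \<bullet> w = 1" and a: "a < qdim n" "a \<noteq> 0"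
  shows "c \<cdot>\<^sub>v wedge_orth n u a (partner a) \<in> EO_directions n u"
proof -
  let ?f = "\<lambda>d. (c * (w $ a * u $ d - w $ partner d * u $ partner a)) \<cdot>\<^sub>v wedge_orth n u (partner a) d
      + (c * (w $ partner d * u $ a - w $ partner a * u $ d)) \<cdot>\<^sub>v wedge_orth n u a d"
  have "?f d \<in> EO_directions n u" if "d \<in> off_pair n a" for d
    using that a partner_neq[of a] unfolding off_pair_def
    by (intro add_in_EO_directions smult_wedge_orth_in_EO_directions_nonpartner[OF n u])
      (auto simp: partner_eq_iff)
  then have "vec (qdim n) (\<lambda>i. \<Sum>d\<in>off_pair n a. ?f d $ i) \<in> EO_directions n u"
    by (intro sum_in_EO_directions[OF u(1,2)]) auto
  then have "c \<cdot>\<^sub>v wedge_orth n u a (partner a)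
      + (c * (w $ partner a * u $ partner a - w $ a * u $ a)) \<cdot>\<^sub>v u \<in> EO_directions n u"
    unfolding sum_wedge_orth_partner[OF u w a] .
  moreover have "esd_admissible n u (c \<cdot>\<^sub>v wedge_orth n u a (partner a))"
    using u a unfolding esd_admissible_def by (simp add: bform_wedge_orth)
  ultimately show ?thesis using add_smult_in_EO_directions_iff by blast
qed

lemma smult_wedge_orth_in_EO_directions:
  fixes u w :: "'a vec"
  assumes n: "3 \<le> n" and u: "u \<in> carrier_vec (qdim n)" "qform n u = 0" "u $ 0 = 0"
    and w: "w \<in> carrier_vec (qdim n)" "u \<bullet> w = 1"
    and a: "a < qdim n" "a \<noteq> 0" and b: "b < qdim n" "b \<noteq> 0"
  shows "c \<cdot>\<^sub>v wedge_orth n u a b \<in> EO_directions n u"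
proof -
  consider "b = a" | "b = partner a" | "b \<noteq> a" "b \<noteq> partner a" by blast
  then show ?thesis
  proof cases
    case 1
    then have "c \<cdot>\<^sub>v wedge_orth n u a b = 0\<^sub>v (qdim n)"
      using a by (intro eq_vecI) (auto simp: wedge_orth_index)
    then show ?thesis using zero_in_EO_directions[OF u(1,2)] by simp
  next
    case 2
    then show ?thesis using smult_wedge_orth_partner_in_EO_directions[OF n u w a] by simp
  next
    case 3
    then show ?thesis using smult_wedge_orth_in_EO_directions_nonpartner[OF n u a b] by simp
  qed
qed

end

theorem mainTheorem7:
  fixes u v :: "'a::comm_ring_1 vec" and n :: nat
  assumes two_inv: "\<exists>h::'a. 2 * h = 1"
    and n3: "n \<ge> 3"
    and u_dim: "u \<in> carrier_vec (2*n+1)" and v_dim: "v \<in> carrier_vec (2*n+1)"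
    and u0: "u $ 0 = 0" and v0: "v $ 0 = 0"
    and u_unimod: "unimodular (2*n+1) u"
    and u_iso: "qform n u = 0"
    and uv: "bform n u v = 0"
  shows "esd_mat n u v \<in> EO n"
proof -
  obtain h :: 'a where half: "2 * h = 1" using two_inv by blast
  have u: "u \<in> carrier_vec (qdim n)" and v: "v \<in> carrier_vec (qdim n)"
    using u_dim v_dim by (simp_all add: qdim_def)
  obtain w where w: "w \<in> carrier_vec (qdim n)" "u \<bullet> w = 1"
    using u_unimod unfolding unimodular_def qdim_def by blast
  define H where "H = {1..<qdim n}"
  have "vec (qdim n) (\<lambda>i. \<Sum>p\<in>H \<times> H. ((v $ fst p * w $ snd p) \<cdot>\<^sub>v wedge_orth n u (fst p) (partner (snd p))) $ i)
      \<in> EO_directions n u"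
    using smult_wedge_orth_in_EO_directions[OF half n3 u u_iso u0 w]
    by (intro sum_in_EO_directions[OF u u_iso]) (auto simp: H_def)
  then have "v \<in> EO_directions n u"
    unfolding H_def sum_wedge_orth_eq[OF u u0 v v0 w uv] .
  then show ?thesis unfolding EO_directions_def by simp
qed

end
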